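(* There exists an explicit family of graphs $G$ on $n$ vertices (with $n\to\infty$) such that $\beta(G)=3$ whereas $\overline{\chi}_f(G)=\Theta(n^{1/4})$.
   Context: For an undirected graph $G$ on vertex set $[n]$, consider the index coding problem: a server holds messages $x_1,\dots,x_n\in\Sigma$ ($|\Sigma|>1$), receiver $i$ wants $x_i$ and knows $x_j$ for every neighbor $j$ of $i$. A solution is an encoding $\mathcal{E}:\Sigma^n\to\Sigma_P$ from which each receiver can recover its message given its side information, for all message values. $\beta_t(G)$ is the minimum of $\lceil\log_2|\Sigma_P|\rceil$ over solutions with $|\Sigma|=2^t$, and $\beta(G)=\lim_t\beta_t(G)/t=\inf_t\beta_t(G)/t$. $\overline{\chi}_f(G)$ is the fractional clique-cover number: the minimum total weight of a nonnegative weighting of cliques of $G$ such that each vertex is covered by total weight at least $1$. *)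

theory Defs
  imports Complex_Main "HOL-Library.Landau_Symbols" "HOL-Library.FuncSet"
begin

definition simple_graph :: "nat \<Rightarrow> (nat \<Rightarrow> nat \<Rightarrow> bool) \<Rightarrow> bool" where
  "simple_graph n E \<longleftrightarrow>
     (\<forall>u v. E u v \<longrightarrow> u < n \<and> v < n \<and> u \<noteq> v) \<and> (\<forall>u v. E u v \<longrightarrow> E v u)"

definition nbrs :: "nat \<Rightarrow> (nat \<Rightarrow> nat \<Rightarrow> bool) \<Rightarrow> nat \<Rightarrow> nat set" where
  "nbrs n E i = {j. j < n \<and> E i j}"

definition messages :: "nat \<Rightarrow> nat \<Rightarrow> (nat \<Rightarrow> nat) set" where
  "messages n t = {0..<n} \<rightarrow>\<^sub>E {0..<(2::nat)^t}"

definition ic_solution ::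
  "nat \<Rightarrow> (nat \<Rightarrow> nat \<Rightarrow> bool) \<Rightarrow> nat \<Rightarrow> nat set \<Rightarrow> ((nat \<Rightarrow> nat) \<Rightarrow> nat) \<Rightarrow> bool" where
  "ic_solution n E t P enc \<longleftrightarrow>
     finite P \<and> enc ` messages n t \<subseteq> P \<and>
     (\<exists>dec :: nat \<Rightarrow> nat \<Rightarrow> (nat \<Rightarrow> nat) \<Rightarrow> nat.
        \<forall>x\<in>messages n t. \<forall>i<n. dec i (enc x) (restrict x (nbrs n E i)) = x i)"

definition beta_t :: "nat \<Rightarrow> (nat \<Rightarrow> nat \<Rightarrow> bool) \<Rightarrow> nat \<Rightarrow> nat" where
  "beta_t n E t = Inf {nat \<lceil>log 2 (real (card P))\<rceil> | P enc. ic_solution n E t P enc}"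

definition beta :: "nat \<Rightarrow> (nat \<Rightarrow> nat \<Rightarrow> bool) \<Rightarrow> real" where
  "beta n E = (INF t\<in>{1..}. real (beta_t n E t) / real t)"

definition cliques :: "nat \<Rightarrow> (nat \<Rightarrow> nat \<Rightarrow> bool) \<Rightarrow> nat set set" where
  "cliques n E = {C. C \<subseteq> {0..<n} \<and> (\<forall>u\<in>C. \<forall>v\<in>C. u \<noteq> v \<longrightarrow> E u v)}"

definition frac_clique_cover :: "nat \<Rightarrow> (nat \<Rightarrow> nat \<Rightarrow> bool) \<Rightarrow> real" where
  "frac_clique_cover n E = Inf {(\<Sum>C\<in>cliques n E. w C) | w :: nat set \<Rightarrow> real.
      (\<forall>C\<in>cliques n E. 0 \<le> w C) \<and>
      (\<forall>v<n. (\<Sum>C\<in>{C\<in>cliques n E. v \<in> C}. w C) \<ge> 1)}"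

end

(*
  The graph lives on the points (a, b), 0 \<le> a < p, 0 \<le> b < p/4, plus three extra vertices;
  each vertex carries a vector of GF(p)^3, and two vertices are adjacent iff a fixed symmetric
  bilinear form does not vanish on their vectors. The Gram matrix of the form is non-zero on the
  diagonal and zero on non-edges, so the corresponding linear index code of rank 3 gives beta \<le> 3;
  the three extra vertices are pairwise non-adjacent, which gives beta \<ge> 3.

  Two points pair to (a - a')^2 + (b + 1) + (b' + 1). Blocks of about sqrt p / 2 consecutive values
  of a are cliques, so O(sqrt p) cliques cover the graph. Conversely, a clique is a point set on
  which this expression never vanishes mod p; counting its incidences with the p^2 + p parabolas
  and vertical lines of the plane, which meet like the lines of a projective plane, and applying
  Cauchy-Schwarz bounds its size by O(p^(3/2)). The p^2/4 points therefore need Omega(sqrt p)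
  cliques even fractionally. With n \<approx> p^2/4 vertices both bounds are Theta(n^(1/4)).
*)

theory Submission
  imports Defs "HOL-Computational_Algebra.Primes" "HOL-Analysis.Convex"
begin

section \<open>Index codes and independent sets\<close>

definition ic_decodable :: "nat \<Rightarrow> (nat \<Rightarrow> nat \<Rightarrow> bool) \<Rightarrow> nat \<Rightarrow> ((nat \<Rightarrow> nat) \<Rightarrow> 'c) \<Rightarrow> bool" where
  "ic_decodable n E t enc \<longleftrightarrow>
     (\<forall>x\<in>messages n t. \<forall>x'\<in>messages n t. \<forall>j<n.
        enc x = enc x' \<longrightarrow> (\<forall>i\<in>nbrs n E j. x i = x' i) \<longrightarrow> x j = x' j)"

lemma ic_decodable_comp:
  assumes "inj_on f Y" "enc ` messages n t \<subseteq> Y" "ic_decodable n E t enc"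
  shows "ic_decodable n E t (f \<circ> enc)"
  using assms unfolding ic_decodable_def by (simp add: image_subset_iff inj_on_eq_iff)

lemma ic_solution_of_decodable_nat:
  fixes enc :: "(nat \<Rightarrow> nat) \<Rightarrow> nat"
  assumes "finite P" "enc ` messages n t \<subseteq> P" and dec: "ic_decodable n E t enc"
  shows "ic_solution n E t P enc"
proof -
  define decoder where "decoder j c r =
      (SOME v. \<exists>x\<in>messages n t. enc x = c \<and> restrict x (nbrs n E j) = r \<and> x j = v)" for j c r
  have "decoder j (enc x) (restrict x (nbrs n E j)) = x j"
    if x: "x \<in> messages n t" and j: "j < n" for x j
    unfolding decoder_def
  proof (rule someI2)
    fix v assume "\<exists>x'\<in>messages n t. enc x' = enc x \<and>
        restrict x' (nbrs n E j) = restrict x (nbrs n E j) \<and> x' j = v"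
    then obtain x' where x': "x' \<in> messages n t" "enc x' = enc x" "x' j = v"
        and side: "restrict x' (nbrs n E j) = restrict x (nbrs n E j)"
      by blast
    have "\<forall>i\<in>nbrs n E j. x' i = x i"
      using side by (metis restrict_apply')
    with x' show "v = x j"
      using dec x j unfolding ic_decodable_def by blast
  qed (use x in blast)
  then show ?thesis using assms(1,2) unfolding ic_solution_def by blast
qed

lemma ic_solution_of_decodable:
  assumes "finite Y" "enc ` messages n t \<subseteq> Y" "ic_decodable n E t enc"
  shows "\<exists>P enc'. ic_solution n E t P enc' \<and> card P = card Y"
proof -
  obtain f where f: "bij_betw f Y {0..<card Y}"
    using ex_bij_betw_finite_nat[OF assms(1)] by blast
  then have "ic_decodable n E t (f \<circ> enc)"
    using assms(2,3) by (intro ic_decodable_comp) (auto simp: bij_betw_def)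
  moreover have "(f \<circ> enc) ` messages n t \<subseteq> {0..<card Y}"
    using assms(2) bij_betw_imp_surj_on[OF f] by auto
  ultimately have "ic_solution n E t {0..<card Y} (f \<circ> enc)"
    by (intro ic_solution_of_decodable_nat) simp_all
  then show ?thesis by fastforce
qed

lemma finite_messages: "finite (messages n t)"
  by (simp add: messages_def finite_PiE)

lemma ic_solution_exists: "\<exists>P enc. ic_solution n E t P enc"
proof -
  have "(\<lambda>x. x) ` messages n t \<subseteq> messages n t" "ic_decodable n E t (\<lambda>x. x)"
    by (auto simp: ic_decodable_def)
  from ic_solution_of_decodable[OF finite_messages this] show ?thesis by blast
qed

lemma ic_solution_card_ge_independent:
  assumes sol: "ic_solution n E t P enc"
    and I: "I \<subseteq> {0..<n}" and indep: "\<forall>u\<in>I. \<forall>v\<in>I. \<not> E u v"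
  shows "2 ^ (t * card I) \<le> card P"
proof -
  from sol obtain dec where finP: "finite P" and encP: "enc ` messages n t \<subseteq> P"
    and dec: "\<forall>x\<in>messages n t. \<forall>i<n. dec i (enc x) (restrict x (nbrs n E i)) = x i"
    unfolding ic_solution_def by blast
  define T where "T = I \<rightarrow>\<^sub>E {0..<(2::nat) ^ t}"
  define msg where "msg y = restrict (\<lambda>i. if i \<in> I then y i else 0) {0..<n}" for y :: "nat \<Rightarrow> nat"
  have msg: "msg y \<in> messages n t" if "y \<in> T" for y
    using that by (auto simp: msg_def T_def messages_def PiE_iff)
  text \<open>A receiver in \<open>I\<close> has no side information about the messages indexed by \<open>I\<close>.\<close>
  have side_info: "restrict (msg y) (nbrs n E r) = restrict (msg y') (nbrs n E r)"
    if "r \<in> I" for r y y'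
    unfolding msg_def using that indep by (intro restrict_ext) (auto simp: nbrs_def)
  have "inj_on (enc \<circ> msg) T"
  proof (rule inj_onI)
    fix y y' assume y: "y \<in> T" and y': "y' \<in> T" and eq: "(enc \<circ> msg) y = (enc \<circ> msg) y'"
    have "y r = y' r" if r: "r \<in> I" for r
    proof -
      have rn: "r < n" using r I by auto
      have "y r = msg y r" using rn r by (simp add: msg_def)
      also have "\<dots> = dec r (enc (msg y)) (restrict (msg y) (nbrs n E r))"
        using dec msg[OF y] rn by simp
      also have "\<dots> = dec r (enc (msg y')) (restrict (msg y') (nbrs n E r))"
        using eq side_info[OF r, of y y'] by simp
      also have "\<dots> = msg y' r"
        using dec msg[OF y'] rn by simp
      also have "\<dots> = y' r" using rn r by (simp add: msg_def)
      finally show ?thesis .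
    qed
    then show "y = y'" using y y' unfolding T_def by (rule PiE_ext[rotated 2])
  qed
  moreover have "(enc \<circ> msg) ` T \<subseteq> P" using encP msg by auto
  ultimately have "card T \<le> card P" by (rule card_inj_on_le[OF _ _ finP])
  moreover have "card T = 2 ^ (t * card I)"
    using finite_subset[OF I] by (simp add: T_def card_PiE power_mult)
  ultimately show ?thesis by simp
qed

lemma beta_t_ge_independent:
  assumes "I \<subseteq> {0..<n}" "\<forall>u\<in>I. \<forall>v\<in>I. \<not> E u v"
  shows "t * card I \<le> beta_t n E t"
  unfolding beta_t_def
proof (rule cInf_greatest)
  show "{nat \<lceil>log 2 (real (card P))\<rceil> | P enc. ic_solution n E t P enc} \<noteq> {}"
    using ic_solution_exists by blast
  fix b assume "b \<in> {nat \<lceil>log 2 (real (card P))\<rceil> | P enc. ic_solution n E t P enc}"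
  then obtain P enc where b: "b = nat \<lceil>log 2 (real (card P))\<rceil>" and "ic_solution n E t P enc"
    by blast
  then have "2 ^ (t * card I) \<le> card P"
    using ic_solution_card_ge_independent assms by blast
  then have "real (t * card I) \<le> log 2 (real (card P))"
    by (rule le_log2_of_power)
  then show "t * card I \<le> b" unfolding b by linarith
qed

lemma beta_ge_independent:
  assumes "I \<subseteq> {0..<n}" "\<forall>u\<in>I. \<forall>v\<in>I. \<not> E u v"
  shows "real (card I) \<le> beta n E"
  unfolding beta_def
proof (rule cINF_greatest)
  fix t :: nat assume "t \<in> {1..}"
  moreover have "real (t * card I) \<le> real (beta_t n E t)"
    using beta_t_ge_independent[OF assms] by (simp only: of_nat_le_iff)
  ultimately show "real (card I) \<le> real (beta_t n E t) / real t"
    by (simp add: le_divide_eq mult.commute)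
qed simp

lemma beta_t_le_card:
  assumes "ic_solution n E t P enc"
  shows "beta_t n E t \<le> nat \<lceil>log 2 (real (card P))\<rceil>"
  unfolding beta_t_def using assms by (intro cInf_lower) blast+

section \<open>Linear index codes\<close>

definition bilin :: "nat \<Rightarrow> (nat \<Rightarrow> nat \<Rightarrow> int) \<Rightarrow> (nat \<Rightarrow> nat \<Rightarrow> int) \<Rightarrow> nat \<Rightarrow> nat \<Rightarrow> int" where
  "bilin d U W i j = (\<Sum>k<d. U i k * W j k)"

text \<open>The matrix \<open>A\<close> fits \<open>G\<close> over \<open>GF(p)\<close> in the sense of Bar-Yossef, Birk, Jayram and Kol.\<close>
definition fits_mod :: "nat \<Rightarrow> nat \<Rightarrow> (nat \<Rightarrow> nat \<Rightarrow> bool) \<Rightarrow> (nat \<Rightarrow> nat \<Rightarrow> int) \<Rightarrow> bool" where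
  "fits_mod p n E A \<longleftrightarrow>
     (\<forall>i<n. \<not> int p dvd A i i) \<and> (\<forall>i<n. \<forall>j<n. i \<noteq> j \<longrightarrow> \<not> E j i \<longrightarrow> int p dvd A i j)"

lemma int_eq_of_dvd_diff:
  fixes p u v :: int
  assumes "0 \<le> u" "u < p" "0 \<le> v" "v < p" "p dvd u - v"
  shows "u = v"
proof (rule ccontr)
  assume "u \<noteq> v"
  then have "\<bar>p\<bar> \<le> \<bar>u - v\<bar>" using dvd_imp_le_int assms(5) by simp
  with assms(1-4) show False by linarith
qed

lemma fits_mod_determines:
  assumes p: "prime p" and fit: "fits_mod p n E (bilin d U W)" and j: "j < n"
    and comb: "\<forall>k<d. int p dvd (\<Sum>i<n. U i k * \<delta> i)"
    and side: "\<forall>i\<in>nbrs n E j. \<delta> i = 0"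
  shows "int p dvd \<delta> j"
proof -
  have "int p dvd (\<Sum>k<d. W j k * (\<Sum>i<n. U i k * \<delta> i))"
    using comb by (intro dvd_sum) simp
  also have "(\<Sum>k<d. W j k * (\<Sum>i<n. U i k * \<delta> i)) = (\<Sum>i<n. bilin d U W i j * \<delta> i)"
    unfolding bilin_def sum_distrib_left sum_distrib_right by (rule sum.swap[THEN trans]) (simp add: ac_simps)
  also have "\<dots> = bilin d U W j j * \<delta> j + (\<Sum>i\<in>{..<n} - {j}. bilin d U W i j * \<delta> i)"
    using j by (intro sum.remove) auto
  finally have total: "int p dvd bilin d U W j j * \<delta> j + (\<Sum>i\<in>{..<n} - {j}. bilin d U W i j * \<delta> i)" .
  have "int p dvd (\<Sum>i\<in>{..<n} - {j}. bilin d U W i j * \<delta> i)"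
  proof (rule dvd_sum)
    fix i assume i: "i \<in> {..<n} - {j}"
    show "int p dvd bilin d U W i j * \<delta> i"
    proof (cases "E j i")
      case True
      then have "\<delta> i = 0" using side i by (simp add: nbrs_def)
      then show ?thesis by simp
    next
      case False
      then show ?thesis using fit i j by (simp add: fits_mod_def)
    qed
  qed
  with total have "int p dvd bilin d U W j j * \<delta> j" by (simp add: dvd_add_left_iff)
  moreover have "\<not> int p dvd bilin d U W j j" using fit j by (simp add: fits_mod_def)
  ultimately show ?thesis using p by (simp add: prime_dvd_mult_iff)
qed

text \<open>Here \<open>digits\<close> is meant to encode messages injectively as vectors in \<open>{0..<p}\<^sup>m\<close>; the code
  applies the matrix \<open>U\<close> to each of the \<open>m\<close> coordinates separately.\<close>
definition linear_code ::
  "nat \<Rightarrow> nat \<Rightarrow> nat \<Rightarrow> nat \<Rightarrow> (nat \<Rightarrow> nat \<Rightarrow> int) \<Rightarrow> (nat \<Rightarrow> nat \<Rightarrow> nat) \<Rightarrow> (nat \<Rightarrow> nat) \<Rightarrow> nat \<times> nat \<Rightarrow> int"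
  where "linear_code p n d m U digits x =
    (\<lambda>(k, l) \<in> {0..<d} \<times> {0..<m}. (\<Sum>i<n. U i k * int (digits (x i) l)) mod int p)"

lemma ic_decodable_linear_code:
  assumes p: "prime p" and fit: "fits_mod p n E (bilin d U W)"
    and digits: "digits ` {0..<2 ^ t} \<subseteq> {0..<m} \<rightarrow>\<^sub>E {0..<p}" "inj_on digits {0..<2 ^ t}"
  shows "ic_decodable n E t (linear_code p n d m U digits)"
  unfolding ic_decodable_def
proof (intro ballI allI impI)
  fix x x' j assume x: "x \<in> messages n t" and x': "x' \<in> messages n t" and j: "j < n"
    and eq: "linear_code p n d m U digits x = linear_code p n d m U digits x'"
    and agree: "\<forall>i\<in>nbrs n E j. x i = x' i"
  have xj: "x j \<in> {0..<2 ^ t}" "x' j \<in> {0..<2 ^ t}"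
    using x x' j by (auto simp: messages_def PiE_iff)
  then have range: "digits (x j) \<in> {0..<m} \<rightarrow>\<^sub>E {0..<p}" "digits (x' j) \<in> {0..<m} \<rightarrow>\<^sub>E {0..<p}"
    using digits(1) by blast+
  have "digits (x j) l = digits (x' j) l" if l: "l < m" for l
  proof -
    define \<delta> where "\<delta> i = int (digits (x i) l) - int (digits (x' i) l)" for i
    have "int p dvd (\<Sum>i<n. U i k * \<delta> i)" if k: "k < d" for k
    proof -
      have "(\<Sum>i<n. U i k * int (digits (x i) l)) mod int p
          = (\<Sum>i<n. U i k * int (digits (x' i) l)) mod int p"
        using fun_cong[OF eq, of "(k, l)"] k l by (simp add: linear_code_def)
      then show ?thesis
        by (simp add: \<delta>_def mod_eq_dvd_iff right_diff_distrib sum_subtractf)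
    qed
    moreover have "\<forall>i\<in>nbrs n E j. \<delta> i = 0" using agree by (simp add: \<delta>_def)
    ultimately have "int p dvd \<delta> j" using fits_mod_determines[OF p fit j] by blast
    then show ?thesis
      using range l int_eq_of_dvd_diff[of "int (digits (x j) l)" "int p" "int (digits (x' j) l)"]
      by (auto simp: \<delta>_def PiE_iff)
  qed
  then have "digits (x j) = digits (x' j)"
    using range by (intro PiE_ext) auto
  then show "x j = x' j"
    using inj_onD[OF digits(2)] xj by blast
qed

lemma beta_t_le_of_fits_mod:
  assumes p: "prime p" and fit: "fits_mod p n E (bilin d U W)" and tm: "2 ^ t \<le> p ^ m"
  shows "beta_t n E t \<le> nat \<lceil>log 2 (real (p ^ (d * m)))\<rceil>"
proof -
  have "card {0..<(2::nat) ^ t} \<le> card ({0..<m} \<rightarrow>\<^sub>E {0..<p})"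
    using tm by (simp add: card_PiE)
  then obtain digits where digits: "digits ` {0..<(2::nat) ^ t} \<subseteq> {0..<m} \<rightarrow>\<^sub>E {0..<p}"
      "inj_on digits {0..<(2::nat) ^ t}"
    using card_le_inj[of "{0..<(2::nat) ^ t}" "{0..<m} \<rightarrow>\<^sub>E {0..<p}"] by (auto simp: finite_PiE)
  define Y where "Y = ({0..<d} \<times> {0..<m}) \<rightarrow>\<^sub>E {0..<int p}"
  have "linear_code p n d m U digits x \<in> Y" for x
    unfolding linear_code_def Y_def restrict_PiE_iff using prime_gt_0_nat[OF p] by auto
  then have "linear_code p n d m U digits ` messages n t \<subseteq> Y" by blast
  moreover have "finite Y" "card Y = p ^ (d * m)"
    by (simp_all add: Y_def finite_PiE card_PiE power_mult)
  ultimately obtain P enc where "ic_solution n E t P enc" "card P = p ^ (d * m)"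
    using ic_solution_of_decodable ic_decodable_linear_code[OF p fit digits] by metis
  then show ?thesis using beta_t_le_card by metis
qed

lemma exists_block_lengths:
  fixes p :: nat and \<epsilon> :: real
  assumes p: "p \<ge> 2" and \<epsilon>: "\<epsilon> > 0"
  shows "\<exists>t m. t \<ge> 1 \<and> 2 ^ t \<le> p ^ m \<and> real (nat \<lceil>log 2 (real (p ^ (d * m)))\<rceil>) / real t < d + \<epsilon>"
proof -
  define L where "L = log 2 (real p)"
  have L: "L \<ge> 1" unfolding L_def using p by simp
  obtain t0 :: nat where "real t0 > (d * L + 1) / \<epsilon>"
    using reals_Archimedean2 by blast
  then obtain t :: nat where t: "real t > (d * L + 1) / \<epsilon>" "t \<ge> 1"
    by (intro that[of "t0 + 1"]) auto
  text \<open>\<open>m\<close> digits in base \<open>p\<close> are just enough for \<open>t\<close> bits.\<close>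
  define m where "m = nat \<lceil>real t / L\<rceil>"
  have "real m = of_int \<lceil>real t / L\<rceil>"
    unfolding m_def using L by simp
  then have m: "real t / L \<le> real m" "real m < real t / L + 1"
    using ceiling_correct[of "real t / L"] by linarith+
  have "real (2 ^ t) = 2 powr real t" by (simp add: powr_realpow)
  also have "\<dots> \<le> 2 powr (real m * L)" using m(1) L by (simp add: field_simps)
  also have "\<dots> = real (p ^ m)"
  proof -
    have "real p = 2 powr L" unfolding L_def using p by simp
    then show ?thesis by (simp add: powr_realpow[symmetric] powr_powr mult.commute)
  qed
  finally have "2 ^ t \<le> p ^ m" by linarith
  have "log 2 (real (p ^ (d * m))) = d * m * L"
    unfolding L_def using p by (simp add: log_nat_power)
  then have "real (nat \<lceil>log 2 (real (p ^ (d * m)))\<rceil>) < d * m * L + 1"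
    using L by (simp add: ceiling_correct) linarith
  also have "\<dots> \<le> d * t + (d * L + 1)"
  proof -
    have "real m * L \<le> real t + L" using m(2) L by (simp add: field_simps)
    then have "d * (real m * L) \<le> d * (real t + L)" by (rule mult_left_mono) simp
    then show ?thesis by (simp add: algebra_simps)
  qed
  also have "\<dots> < (d + \<epsilon>) * t"
    using t \<epsilon> by (simp add: field_simps)
  finally show ?thesis
    using t(2) \<open>2 ^ t \<le> p ^ m\<close> by (auto simp: divide_less_eq)
qed

lemma beta_le_of_fits_mod:
  assumes p: "prime p" and fit: "fits_mod p n E (bilin d U W)"
  shows "beta n E \<le> d"
proof (rule field_le_epsilon)
  fix \<epsilon> :: real assume "0 < \<epsilon>"
  then obtain t m where tm: "t \<ge> 1" "2 ^ t \<le> p ^ m"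
    and rate: "real (nat \<lceil>log 2 (real (p ^ (d * m)))\<rceil>) / real t < d + \<epsilon>"
    using exists_block_lengths prime_ge_2_nat[OF p] by blast
  have "beta n E \<le> real (beta_t n E t) / real t"
    unfolding beta_def using tm(1) by (intro cINF_lower bdd_belowI[of _ 0]) auto
  also have "\<dots> \<le> real (nat \<lceil>log 2 (real (p ^ (d * m)))\<rceil>) / real t"
    using beta_t_le_of_fits_mod[OF p fit tm(2)] by (simp add: divide_right_mono)
  finally show "beta n E \<le> d + \<epsilon>" using rate by simp
qed

section \<open>Fractional clique covers\<close>

definition fractional_cover :: "nat \<Rightarrow> (nat \<Rightarrow> nat \<Rightarrow> bool) \<Rightarrow> (nat set \<Rightarrow> real) \<Rightarrow> bool" where
  "fractional_cover n E w \<longleftrightarrow>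
     (\<forall>C\<in>cliques n E. 0 \<le> w C) \<and> (\<forall>v<n. (\<Sum>C\<in>{C\<in>cliques n E. v \<in> C}. w C) \<ge> 1)"

lemma frac_clique_cover_eq_Inf:
  "frac_clique_cover n E = Inf {(\<Sum>C\<in>cliques n E. w C) | w. fractional_cover n E w}"
  unfolding frac_clique_cover_def fractional_cover_def ..

lemma finite_cliques: "finite (cliques n E)"
  by (rule finite_subset[of _ "Pow {0..<n}"]) (auto simp: cliques_def)

lemma fractional_cover_indicator:
  assumes "F \<subseteq> cliques n E" "\<forall>v<n. \<exists>C\<in>F. v \<in> C"
  shows "fractional_cover n E (\<lambda>C. of_bool (C \<in> F))"
  unfolding fractional_cover_def
proof (intro conjI allI impI ballI)
  fix v assume "v < n"
  then obtain C0 where C0: "C0 \<in> F" "v \<in> C0" using assms(2) by blast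
  have "of_bool (C0 \<in> F) \<le> (\<Sum>C\<in>{C\<in>cliques n E. v \<in> C}. of_bool (C \<in> F) :: real)"
    using C0 assms(1) by (intro member_le_sum) (auto simp: finite_cliques)
  then show "(\<Sum>C\<in>{C\<in>cliques n E. v \<in> C}. of_bool (C \<in> F)) \<ge> (1::real)" using C0 by simp
qed simp

lemma frac_clique_cover_le_card:
  assumes F: "F \<subseteq> cliques n E" and cover: "\<forall>v<n. \<exists>C\<in>F. v \<in> C"
  shows "frac_clique_cover n E \<le> card F"
proof -
  have "(\<Sum>C\<in>cliques n E. of_bool (C \<in> F) :: real) = card (cliques n E \<inter> F)"
    using finite_cliques by (simp add: Int_def)
  also have "cliques n E \<inter> F = F" using F by blast
  finally have "real (card F) \<in> {(\<Sum>C\<in>cliques n E. w C) | w. fractional_cover n E w}"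
    using fractional_cover_indicator[OF F cover] by (metis (mono_tags, lifting) mem_Collect_eq)
  then show ?thesis
    unfolding frac_clique_cover_eq_Inf by (rule cInf_lower) (auto intro!: bdd_belowI[of _ 0]
        sum_nonneg simp: fractional_cover_def)
qed

lemma frac_clique_cover_ge:
  assumes V: "V \<subseteq> {0..<n}" and \<omega>: "\<omega> > 0"
    and clique: "\<forall>C\<in>cliques n E. real (card (C \<inter> V)) \<le> \<omega>"
  shows "real (card V) / \<omega> \<le> frac_clique_cover n E"
  unfolding frac_clique_cover_eq_Inf
proof (rule cInf_greatest)
  have "{v} \<in> cliques n E" if "v < n" for v using that by (simp add: cliques_def)
  then have "fractional_cover n E (\<lambda>C. of_bool (C \<in> (\<lambda>v. {v}) ` {0..<n}))"
    by (intro fractional_cover_indicator) auto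
  then show "{(\<Sum>C\<in>cliques n E. w C) | w. fractional_cover n E w} \<noteq> {}" by blast
next
  fix x assume "x \<in> {(\<Sum>C\<in>cliques n E. w C) | w. fractional_cover n E w}"
  then obtain w where x: "x = (\<Sum>C\<in>cliques n E. w C)" and w: "fractional_cover n E w"
    by blast
  have finV: "finite V" using V finite_subset by blast
  have "real (card V) \<le> (\<Sum>v\<in>V. \<Sum>C\<in>{C\<in>cliques n E. v \<in> C}. w C)"
    using w V by (auto simp: fractional_cover_def intro!: sum_bounded_below[of V 1, simplified])
  also have "\<dots> = (\<Sum>v\<in>V. \<Sum>C\<in>cliques n E. w C * of_bool (v \<in> C))"
    using finite_cliques by (simp add: sum_mult_of_bool_eq Int_def)
  also have "\<dots> = (\<Sum>C\<in>cliques n E. w C * real (card (C \<inter> V)))"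
    using finV by (subst sum.swap) (simp add: sum_distrib_left[symmetric] Int_def conj_commute)
  also have "\<dots> \<le> (\<Sum>C\<in>cliques n E. w C * \<omega>)"
    using w clique by (intro sum_mono mult_left_mono) (auto simp: fractional_cover_def)
  also have "\<dots> = x * \<omega>" by (simp add: x sum_distrib_right)
  finally show "real (card V) / \<omega> \<le> x" using \<omega> by (simp add: divide_le_eq)
qed

section \<open>Point sets with no vanishing pair\<close>

lemma sum_card_incidences:
  assumes "finite S" "finite D"
  shows "(\<Sum>z\<in>D. card {x\<in>S. inc z x}) = (\<Sum>x\<in>S. card {z\<in>D. inc z x})"
proof -
  have "(\<Sum>z\<in>D. card {x\<in>S. inc z x}) = (\<Sum>z\<in>D. \<Sum>x\<in>S. of_bool (inc z x))"
    using assms by (simp add: Int_def)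
  also have "\<dots> = (\<Sum>x\<in>S. \<Sum>z\<in>D. of_bool (inc z x))" by (rule sum.swap)
  also have "\<dots> = (\<Sum>x\<in>S. card {z\<in>D. inc z x})" using assms by (simp add: Int_def)
  finally show ?thesis .
qed

lemma sum_card_incidences_sq:
  assumes "finite S" "finite D"
  shows "(\<Sum>z\<in>D. (card {x\<in>S. inc z x})\<^sup>2) = (\<Sum>x\<in>S. \<Sum>y\<in>S. card {z\<in>D. inc z x \<and> inc z y})"
proof -
  have "(card {x\<in>S. inc z x})\<^sup>2 = (\<Sum>x\<in>S. \<Sum>y\<in>S. of_bool (inc z x \<and> inc z y))" for z
  proof -
    have "card {x\<in>S. inc z x} = (\<Sum>x\<in>S. of_bool (inc z x))" using assms by (simp add: Int_def)
    then show ?thesis by (simp only: power2_eq_square sum_product of_bool_conj)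
  qed
  then have "(\<Sum>z\<in>D. (card {x\<in>S. inc z x})\<^sup>2) = (\<Sum>x\<in>S. \<Sum>y\<in>S. \<Sum>z\<in>D. of_bool (inc z x \<and> inc z y))"
    by (simp add: sum.swap[of _ D])
  also have "\<dots> = (\<Sum>x\<in>S. \<Sum>y\<in>S. card {z\<in>D. inc z x \<and> inc z y})"
    using assms by (simp add: Int_def)
  finally show ?thesis .
qed

lemma incidence_bound:
  fixes inc :: "'z \<Rightarrow> 'x \<Rightarrow> bool" and r :: real
  assumes S: "finite S" and D: "finite D"
    and through: "\<And>x. x \<in> S \<Longrightarrow> real (card {z\<in>D. inc z x}) = r"
    and common: "\<And>x y. x \<in> S \<Longrightarrow> y \<in> S \<Longrightarrow> x \<noteq> y \<Longrightarrow> card {z\<in>D. inc z x \<and> inc z y} \<le> 1"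
  shows "(card S * r)\<^sup>2 \<le> card D * (card S * (r + card S - 1))"
proof -
  define deg where "deg z = real (card {x\<in>S. inc z x})" for z
  have "(\<Sum>z\<in>D. deg z) = (\<Sum>x\<in>S. real (card {z\<in>D. inc z x}))"
    using arg_cong[where f = real, OF sum_card_incidences[OF S D, of inc]] by (simp add: deg_def)
  also have "\<dots> = card S * r" using through by simp
  finally have first_moment: "(\<Sum>z\<in>D. deg z) = card S * r" .
  have "(\<Sum>z\<in>D. (deg z)\<^sup>2) = (\<Sum>x\<in>S. \<Sum>y\<in>S. real (card {z\<in>D. inc z x \<and> inc z y}))"
    using arg_cong[where f = real, OF sum_card_incidences_sq[OF S D, of inc]] by (simp add: deg_def)
  also have "\<dots> \<le> (\<Sum>x\<in>S. r + real (card S) - 1)"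
  proof (rule sum_mono)
    fix x assume x: "x \<in> S"
    have "(\<Sum>y\<in>S. real (card {z\<in>D. inc z x \<and> inc z y}))
        = r + (\<Sum>y\<in>S - {x}. real (card {z\<in>D. inc z x \<and> inc z y}))"
      using S x through[OF x] by (simp add: sum.remove)
    also have "\<dots> \<le> r + (\<Sum>y\<in>S - {x}. 1)"
      using common[OF x] by (intro add_left_mono sum_mono) auto
    also have "\<dots> = r + real (card S) - 1"
    proof -
      have "card S \<ge> 1" using x S by (auto simp: Suc_le_eq card_gt_0_iff)
      then show ?thesis using x S by (simp add: of_nat_diff)
    qed
    finally show "(\<Sum>y\<in>S. real (card {z\<in>D. inc z x \<and> inc z y})) \<le> r + real (card S) - 1" .
  qed
  finally have second_moment: "(\<Sum>z\<in>D. (deg z)\<^sup>2) \<le> card S * (r + card S - 1)"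
    by (simp add: algebra_simps)
  have "(card S * r)\<^sup>2 \<le> (\<Sum>z\<in>D. (deg z)\<^sup>2) * card D"
    unfolding first_moment[symmetric] by (rule sum_squared_le_sum_of_squares)
  also have "\<dots> \<le> card D * (card S * (r + card S - 1))"
    using second_moment by (simp add: mult.commute mult_left_mono)
  finally show ?thesis .
qed

text \<open>Over \<open>GF(p)\<close>, in the \<open>(a, c)\<close>-plane, \<open>Inl (\<alpha>, \<beta>)\<close> is the parabola \<open>c = 2\<alpha>a - a\<^sup>2 - \<beta>\<close> and
  \<open>Inr \<gamma>\<close> the vertical line \<open>2a = \<gamma>\<close>. Like the lines of a projective plane, every point lies on
  \<open>p + 1\<close> of these curves and two points lie on at most one common curve.\<close>
definition curves :: "int \<Rightarrow> ((int \<times> int) + int) set" where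
  "curves p = Inl ` ({0..<p} \<times> {0..<p}) \<union> Inr ` {0..<p}"

definition on_curve :: "int \<Rightarrow> (int \<times> int) + int \<Rightarrow> int \<times> int \<Rightarrow> bool" where
  "on_curve p z x = (case z of
      Inl (\<alpha>, \<beta>) \<Rightarrow> p dvd \<beta> + (fst x)\<^sup>2 + snd x - 2 * fst x * \<alpha>
    | Inr \<gamma> \<Rightarrow> p dvd \<gamma> - 2 * fst x)"

lemma finite_curves: "finite (curves p)"
  by (simp add: curves_def)

lemma card_curves:
  assumes "0 \<le> p"
  shows "int (card (curves p)) = p * p + p"
proof -
  have "card (curves p) = card (Inl ` ({0..<p} \<times> {0..<p}) :: ((int \<times> int) + int) set)
      + card (Inr ` {0..<p} :: ((int \<times> int) + int) set)"
    unfolding curves_def by (rule card_Un_disjoint) auto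
  also have "\<dots> = nat p * nat p + nat p"
    by (simp add: card_image card_cartesian_product)
  finally show ?thesis using assms by simp
qed

lemma atLeastLessThan_dvd_diff_eq:
  fixes p v :: int
  assumes "0 < p"
  shows "{\<beta>\<in>{0..<p}. p dvd \<beta> - v} = {v mod p}"
proof -
  have "p dvd \<beta> - v \<longleftrightarrow> p dvd \<beta> - v mod p" for \<beta>
    by (metis mod_eq_dvd_iff mod_mod_trivial)
  then show ?thesis
    using assms int_eq_of_dvd_diff[of _ p "v mod p"] by (auto simp: dvd_minus_mod)
qed

lemma card_curves_through:
  assumes "0 < p"
  shows "int (card {z\<in>curves p. on_curve p z x}) = p + 1"
proof -
  obtain a c where x: "x = (a, c)" by fastforce
  have parabolas: "{q\<in>{0..<p} \<times> {0..<p}. on_curve p (Inl q) x}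
      = (SIGMA \<alpha>:{0..<p}. {\<beta>\<in>{0..<p}. p dvd \<beta> - (2 * a * \<alpha> - a\<^sup>2 - c)})"
    by (auto simp: on_curve_def x algebra_simps)
  have "card {z\<in>curves p. on_curve p z x}
      = card (Inl ` {q\<in>{0..<p} \<times> {0..<p}. on_curve p (Inl q) x} \<union> Inr ` {\<gamma>\<in>{0..<p}. on_curve p (Inr \<gamma>) x})"
    by (rule arg_cong[where f = card]) (auto simp: curves_def)
  also have "\<dots>
      = card {q\<in>{0..<p} \<times> {0..<p}. on_curve p (Inl q) x} + card {\<gamma>\<in>{0..<p}. on_curve p (Inr \<gamma>) x}"
  proof -
    have "finite {q\<in>{0..<p} \<times> {0..<p}. on_curve p (Inl q) x}" "finite {\<gamma>\<in>{0..<p}. on_curve p (Inr \<gamma>) x}"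
      by (auto intro: rev_finite_subset[of "{0..<p}"] rev_finite_subset[of "{0..<p} \<times> {0..<p}"])
    then show ?thesis by (subst card_Un_disjoint) (auto simp: card_image)
  qed
  also have "\<dots> = nat p + 1"
  proof -
    have "card (SIGMA \<alpha>:{0..<p}. {\<beta>\<in>{0..<p}. p dvd \<beta> - (2 * a * \<alpha> - a\<^sup>2 - c)})
        = (\<Sum>\<alpha>\<in>{0..<p}. card {\<beta>\<in>{0..<p}. p dvd \<beta> - (2 * a * \<alpha> - a\<^sup>2 - c)})"
      by (rule card_SigmaI) (auto intro: rev_finite_subset[of "{0..<p}"])
    moreover have "{\<gamma>\<in>{0..<p}. on_curve p (Inr \<gamma>) x} = {\<gamma>\<in>{0..<p}. p dvd \<gamma> - 2 * a}"
      by (simp add: on_curve_def x)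
    ultimately show ?thesis
      unfolding parabolas by (simp only: atLeastLessThan_dvd_diff_eq[OF assms]) simp
  qed
  finally show ?thesis using assms by simp
qed

lemma odd_prime_dvd_double:
  fixes p u :: int
  assumes "prime p" "p > 2" "p dvd 2 * u"
  shows "p dvd u"
  using assms zdvd_imp_le[of p 2] by (auto simp: prime_dvd_mult_iff)

lemma parabola_through_two_points_unique:
  fixes p :: int
  assumes p: "prime p" "p > 2"
    and a: "0 \<le> a" "a < p" "0 \<le> a'" "a' < p" "a \<noteq> a'"
    and q: "q1 \<in> {0..<p} \<times> {0..<p}" "q2 \<in> {0..<p} \<times> {0..<p}"
    and on: "on_curve p (Inl q1) (a, c)" "on_curve p (Inl q1) (a', c')"
      "on_curve p (Inl q2) (a, c)" "on_curve p (Inl q2) (a', c')"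
  shows "q1 = q2"
proof -
  obtain \<alpha>1 \<beta>1 \<alpha>2 \<beta>2 where q12: "q1 = (\<alpha>1, \<beta>1)" "q2 = (\<alpha>2, \<beta>2)" by fastforce
  have on1: "p dvd \<beta>1 + a\<^sup>2 + c - 2 * a * \<alpha>1" "p dvd \<beta>1 + a'\<^sup>2 + c' - 2 * a' * \<alpha>1"
    and on2: "p dvd \<beta>2 + a\<^sup>2 + c - 2 * a * \<alpha>2" "p dvd \<beta>2 + a'\<^sup>2 + c' - 2 * a' * \<alpha>2"
    using on by (simp_all add: on_curve_def q12)
  have "p dvd (\<beta>1 + a\<^sup>2 + c - 2 * a * \<alpha>1 - (\<beta>2 + a\<^sup>2 + c - 2 * a * \<alpha>2))
      - (\<beta>1 + a'\<^sup>2 + c' - 2 * a' * \<alpha>1 - (\<beta>2 + a'\<^sup>2 + c' - 2 * a' * \<alpha>2))"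
    by (rule dvd_diff[OF dvd_diff[OF on1(1) on2(1)] dvd_diff[OF on1(2) on2(2)]])
  also have "\<dots> = 2 * ((a' - a) * (\<alpha>1 - \<alpha>2))" by (simp add: algebra_simps)
  finally have "p dvd (a' - a) * (\<alpha>1 - \<alpha>2)" using odd_prime_dvd_double p by blast
  moreover have "\<not> p dvd a' - a" using a int_eq_of_dvd_diff[of a' p a] by auto
  ultimately have "p dvd \<alpha>1 - \<alpha>2" using p(1) by (simp add: prime_dvd_mult_iff)
  then have \<alpha>: "\<alpha>1 = \<alpha>2" using q int_eq_of_dvd_diff by (auto simp: q12)
  have "p dvd \<beta>1 + a\<^sup>2 + c - 2 * a * \<alpha>1 - (\<beta>2 + a\<^sup>2 + c - 2 * a * \<alpha>2)"
    by (rule dvd_diff[OF on1(1) on2(1)])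
  then have "p dvd \<beta>1 - \<beta>2" by (simp add: \<alpha>)
  then have "\<beta>1 = \<beta>2" using q int_eq_of_dvd_diff by (auto simp: q12)
  with \<alpha> show ?thesis by (simp add: q12)
qed

lemma vertical_line_same_abscissa:
  fixes p :: int
  assumes p: "prime p" "p > 2" and a: "0 \<le> a" "a < p" "0 \<le> a'" "a' < p"
    and on: "on_curve p (Inr \<gamma>) (a, c)" "on_curve p (Inr \<gamma>) (a', c')"
  shows "a = a'"
proof -
  have "p dvd (\<gamma> - 2 * a) - (\<gamma> - 2 * a')"
    by (rule dvd_diff) (use on in \<open>simp_all add: on_curve_def\<close>)
  then have "p dvd 2 * (a' - a)" by (simp add: algebra_simps)
  then have "p dvd a' - a" using odd_prime_dvd_double[OF p] by blast
  then show ?thesis using int_eq_of_dvd_diff[of a' p a] a by simp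
qed

lemma parabola_same_abscissa:
  fixes p :: int
  assumes c: "0 \<le> c" "c < p" "0 \<le> c'" "c' < p"
    and on: "on_curve p (Inl q) (a, c)" "on_curve p (Inl q) (a, c')"
  shows "c = c'"
proof -
  obtain \<alpha> \<beta> where q: "q = (\<alpha>, \<beta>)" by fastforce
  have "p dvd (\<beta> + a\<^sup>2 + c - 2 * a * \<alpha>) - (\<beta> + a\<^sup>2 + c' - 2 * a * \<alpha>)"
    by (rule dvd_diff) (use on in \<open>simp_all add: on_curve_def q\<close>)
  then have "p dvd c - c'" by simp
  then show ?thesis using int_eq_of_dvd_diff c by blast
qed

lemma curves_through_two_points:
  fixes p :: int
  assumes p: "prime p" "p > 2"
    and x: "x \<in> {0..<p} \<times> {0..<p}" and y: "y \<in> {0..<p} \<times> {0..<p}" and "x \<noteq> y"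
  shows "card {z\<in>curves p. on_curve p z x \<and> on_curve p z y} \<le> 1"
proof -
  obtain a c a' c' where xy: "x = (a, c)" "y = (a', c')" by fastforce
  have bounds: "0 \<le> a" "a < p" "0 \<le> c" "c < p" "0 \<le> a'" "a' < p" "0 \<le> c'" "c' < p"
    using x y by (auto simp: xy)
  have parabola: "a \<noteq> a'" if "on_curve p (Inl q) x" "on_curve p (Inl q) y" for q
    using parabola_same_abscissa[of c p c' q a] that bounds \<open>x \<noteq> y\<close> by (auto simp: xy)
  have "z1 = z2" if z1: "z1 \<in> curves p" "on_curve p z1 x" "on_curve p z1 y"
    and z2: "z2 \<in> curves p" "on_curve p z2 x" "on_curve p z2 y" for z1 z2
  proof (cases "a = a'")
    case True
    then obtain \<gamma>1 \<gamma>2 where \<gamma>: "z1 = Inr \<gamma>1" "z2 = Inr \<gamma>2"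
      using parabola z1 z2 by (cases z1; cases z2) auto
    have "p dvd (\<gamma>1 - 2 * a) - (\<gamma>2 - 2 * a)"
      by (rule dvd_diff) (use z1 z2 in \<open>simp_all add: on_curve_def xy \<gamma>\<close>)
    then have "\<gamma>1 = \<gamma>2"
      using z1(1) z2(1) int_eq_of_dvd_diff[of \<gamma>1 p \<gamma>2] by (auto simp: curves_def \<gamma>)
    then show ?thesis by (simp add: \<gamma>)
  next
    case False
    then obtain q1 q2 where q: "z1 = Inl q1" "z2 = Inl q2"
      using vertical_line_same_abscissa[OF p bounds(1,2,5,6)] z1 z2 by (cases z1; cases z2) (auto simp: xy)
    have "q1 \<in> {0..<p} \<times> {0..<p}" "q2 \<in> {0..<p} \<times> {0..<p}"
      using z1(1) z2(1) by (auto simp: curves_def q)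
    with False show ?thesis
      using parabola_through_two_points_unique[OF p bounds(1,2,5,6) False] z1 z2 by (simp add: q xy)
  qed
  moreover have "finite {z\<in>curves p. on_curve p z x \<and> on_curve p z y}"
    using finite_curves by simp
  ultimately show ?thesis by (auto simp: card_le_Suc0_iff_eq)
qed

definition orth_curve :: "int \<Rightarrow> int \<times> int \<Rightarrow> (int \<times> int) + int" where
  "orth_curve p y = Inl (fst y, ((fst y)\<^sup>2 + snd y) mod p)"

lemma on_orth_curve_iff:
  "on_curve p (orth_curve p y) x \<longleftrightarrow> p dvd (fst x - fst y)\<^sup>2 + snd x + snd y"
proof -
  define m where "m = (fst y)\<^sup>2 + snd y"
  have "on_curve p (orth_curve p y) x \<longleftrightarrow> p dvd m mod p + ((fst x)\<^sup>2 + snd x - 2 * fst x * fst y)"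
    by (simp add: on_curve_def orth_curve_def m_def add.assoc add_diff_eq)
  also have "\<dots> \<longleftrightarrow> p dvd m + ((fst x)\<^sup>2 + snd x - 2 * fst x * fst y)"
    by (simp add: dvd_eq_mod_eq_0 mod_add_left_eq)
  also have "m + ((fst x)\<^sup>2 + snd x - 2 * fst x * fst y) = (fst x - fst y)\<^sup>2 + snd x + snd y"
    by (simp add: m_def power2_eq_square algebra_simps)
  finally show ?thesis .
qed

lemma orth_curve_in_curves:
  "0 < p \<Longrightarrow> y \<in> {0..<p} \<times> {0..<p} \<Longrightarrow> orth_curve p y \<in> curves p"
  by (auto simp: orth_curve_def curves_def)

lemma inj_on_orth_curve: "inj_on (orth_curve p) ({0..<p} \<times> {0..<p})"
proof (rule inj_onI)
  fix x y assume x: "x \<in> {0..<p} \<times> {0..<p}" and y: "y \<in> {0..<p} \<times> {0..<p}"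
    and "orth_curve p x = orth_curve p y"
  then have "fst x = fst y" "((fst x)\<^sup>2 + snd x) mod p = ((fst x)\<^sup>2 + snd y) mod p"
    by (auto simp: orth_curve_def)
  moreover from this(2) have "p dvd snd x - snd y" by (simp add: mod_eq_dvd_iff)
  then have "snd x = snd y" using x y int_eq_of_dvd_diff by (auto simp: mem_Times_iff)
  ultimately show "x = y" by (simp add: prod_eq_iff)
qed

lemma not_on_own_orth_curve:
  fixes p :: int
  assumes p: "prime p" "p > 2" and x: "1 \<le> snd x" "snd x < p"
  shows "\<not> on_curve p (orth_curve p x) x"
proof -
  have "\<not> p dvd snd x" using x zdvd_imp_le by fastforce
  then show ?thesis using odd_prime_dvd_double[OF p, of "snd x"] by (auto simp: on_orth_curve_iff)
qed

lemma cubic_bound_of_incidence: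
  fixes s P :: real
  assumes "0 \<le> s" "0 \<le> P" "(s * (P + 1))\<^sup>2 \<le> (P * P + P - s) * (s * (P + s))"
  shows "s\<^sup>2 \<le> P\<^sup>2 * (P + 1)"
proof -
  text \<open>Expanding, the hypothesis says \<open>s * (s\<^sup>2 + 2Ps + s - P\<^sup>3 - P\<^sup>2) \<le> 0\<close>.\<close>
  have "s * (s * s) \<le> s * (P * P * (P + 1) - (2 * s * P + s))"
    using assms(3) by (simp add: power2_eq_square algebra_simps)
  also have "\<dots> \<le> s * (P * P * (P + 1))"
  proof -
    have "0 \<le> 2 * s * P + s" using assms(1,2) by simp
    then show ?thesis using assms(1) by (intro mult_left_mono) simp_all
  qed
  finally show ?thesis
    using assms(1,2) by (cases "s = 0") (auto simp: power2_eq_square)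
qed

text \<open>Count incidences of \<open>S\<close> with the curves other than the orthogonal curves of its points,
  all of which avoid \<open>S\<close>.\<close>
lemma card_sq_le_if_pairs_nonzero:
  fixes p :: int and S :: "(int \<times> int) set"
  assumes p: "prime p" "p > 2" and S: "S \<subseteq> {0..<p} \<times> {1..<p}"
    and pairs: "\<forall>x\<in>S. \<forall>y\<in>S. x \<noteq> y \<longrightarrow> \<not> p dvd (fst x - fst y)\<^sup>2 + snd x + snd y"
  shows "(real (card S))\<^sup>2 \<le> (real_of_int p)\<^sup>2 * (real_of_int p + 1)"
proof -
  have S': "S \<subseteq> {0..<p} \<times> {0..<p}" and finS: "finite S"
    using S by (auto intro: finite_subset)
  have avoided: "\<not> on_curve p (orth_curve p y) x" if "x \<in> S" "y \<in> S" for x y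
  proof (cases "x = y")
    case True
    then show ?thesis using not_on_own_orth_curve[OF p] S that by auto
  qed (use pairs that on_orth_curve_iff in blast)
  have orth_S: "orth_curve p ` S \<subseteq> curves p" "card (orth_curve p ` S) = card S"
    using S' p orth_curve_in_curves card_image[OF inj_on_subset[OF inj_on_orth_curve S']] by auto
  define D where "D = curves p - orth_curve p ` S"
  have through: "real (card {z\<in>D. on_curve p z x}) = real_of_int p + 1" if "x \<in> S" for x
  proof -
    have "{z\<in>D. on_curve p z x} = {z\<in>curves p. on_curve p z x}"
      using avoided[OF that] by (auto simp: D_def)
    then show ?thesis using card_curves_through[of p x] p by simp
  qed
  have common: "card {z\<in>D. on_curve p z x \<and> on_curve p z y} \<le> 1"
    if "x \<in> S" "y \<in> S" "x \<noteq> y" for x y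
  proof -
    have "card {z\<in>D. on_curve p z x \<and> on_curve p z y} \<le> card {z\<in>curves p. on_curve p z x \<and> on_curve p z y}"
      using finite_curves by (intro card_mono) (auto simp: D_def)
    also have "\<dots> \<le> 1" using that S' by (intro curves_through_two_points[OF p]) auto
    finally show ?thesis .
  qed
  have "int (card D) = p * p + p - int (card S)"
    using card_curves[of p] p orth_S card_mono[OF finite_curves orth_S(1)]
    by (simp add: D_def card_Diff_subset finite_curves finite_subset of_nat_diff)
  then have card_D: "real (card D) = real_of_int p * real_of_int p + real_of_int p - real (card S)"
    by (metis of_int_of_nat_eq of_int_add of_int_diff of_int_mult)
  define s P where "s = real (card S)" and "P = real_of_int p"
  have "(s * (P + 1))\<^sup>2 \<le> real (card D) * (s * (P + 1 + s - 1))"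
    unfolding s_def P_def
    by (rule incidence_bound[OF finS _ through common]) (simp_all add: D_def finite_curves)
  also have "\<dots> = (P * P + P - s) * (s * (P + s))"
    by (simp add: card_D s_def P_def)
  finally show ?thesis
    using p by (intro cubic_bound_of_incidence[of s P, unfolded s_def P_def]) (simp_all add: s_def P_def)
qed

section \<open>The graph\<close>

text \<open>Vertex \<open>i < p * qf_rows p\<close> is the point \<open>(a, b) = (i mod p, i div p)\<close> and carries the vector
  \<open>(1, a, a\<^sup>2 + b + 1)\<close>; the last three vertices carry \<open>(0, 1, 0)\<close>, \<open>(1, 0, 1)\<close> and \<open>(1, 0, -1)\<close>.
  Under the form \<open>u\<^sub>0 w\<^sub>2 - 2 u\<^sub>1 w\<^sub>1 + u\<^sub>2 w\<^sub>0\<close> two points pair to \<open>(a - a')\<^sup>2 + (b + 1) + (b' + 1)\<close>,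
  and two vertices are adjacent iff their pairing is non-zero modulo \<open>p\<close>.\<close>
definition qf_rows :: "nat \<Rightarrow> nat" where
  "qf_rows p = p div 4"

definition qf_size :: "nat \<Rightarrow> nat" where
  "qf_size p = p * qf_rows p + 3"

definition qf_vec :: "nat \<Rightarrow> nat \<Rightarrow> nat \<Rightarrow> int" where
  "qf_vec p i k =
     (if i < p * qf_rows p then [1, int (i mod p), (int (i mod p))\<^sup>2 + int (i div p) + 1] ! k
      else if i = p * qf_rows p then [0, 1, 0] ! k
      else if i = p * qf_rows p + 1 then [1, 0, 1] ! k
      else [1, 0, -1] ! k)"

definition qf_covec :: "nat \<Rightarrow> nat \<Rightarrow> nat \<Rightarrow> int" where
  "qf_covec p j k = [qf_vec p j 2, -2 * qf_vec p j 1, qf_vec p j 0] ! k"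

abbreviation qf_form :: "nat \<Rightarrow> nat \<Rightarrow> nat \<Rightarrow> int" where
  "qf_form p \<equiv> bilin 3 (qf_vec p) (qf_covec p)"

definition qf_graph :: "nat \<Rightarrow> nat \<Rightarrow> nat \<Rightarrow> bool" where
  "qf_graph p i j \<longleftrightarrow> i < qf_size p \<and> j < qf_size p \<and> i \<noteq> j \<and> \<not> int p dvd qf_form p i j"

lemma qf_form_eq:
  "qf_form p i j = qf_vec p i 0 * qf_vec p j 2 - 2 * (qf_vec p i 1 * qf_vec p j 1) + qf_vec p i 2 * qf_vec p j 0"
  by (simp add: bilin_def qf_covec_def eval_nat_numeral)

lemma qf_form_commute: "qf_form p i j = qf_form p j i"
  unfolding qf_form_eq by (simp add: algebra_simps)

lemma qf_form_points:
  assumes "i < p * qf_rows p" "j < p * qf_rows p"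
  shows "qf_form p i j = (int (i mod p) - int (j mod p))\<^sup>2 + (int (i div p) + 1) + (int (j div p) + 1)"
  unfolding qf_form_eq using assms by (simp add: qf_vec_def power2_eq_square algebra_simps)

lemma qf_form_extra_vertices:
  assumes "p * qf_rows p \<le> i" "i < qf_size p" "p * qf_rows p \<le> j" "j < qf_size p"
  shows "qf_form p i j = (if i \<noteq> j then 0 else if i = p * qf_rows p + 1 then 2 else -2)"
proof -
  have "i = p * qf_rows p + (i - p * qf_rows p)" "j = p * qf_rows p + (j - p * qf_rows p)"
    "i - p * qf_rows p < 3" "j - p * qf_rows p < 3"
    using assms by (simp_all add: qf_size_def)
  then show ?thesis
    unfolding qf_form_eq qf_vec_def
    by (auto simp: less_Suc_eq numeral_3_eq_3 simp del: Nat.add_diff_assoc2)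
qed

lemma qf_row_lt:
  assumes "p > 0" "i < p * qf_rows p"
  shows "i div p < qf_rows p" "qf_rows p < p"
  using assms by (simp_all add: div_less_iff_less_mult mult.commute qf_rows_def)

lemma simple_graph_qf_graph: "simple_graph (qf_size p) (qf_graph p)"
  unfolding simple_graph_def qf_graph_def using qf_form_commute by metis

lemma beta_qf_graph:
  assumes p: "prime p" "p > 2"
  shows "beta (qf_size p) (qf_graph p) = 3"
proof -
  define N where "N = p * qf_rows p"
  have diag: "\<not> int p dvd qf_form p i i" if i: "i < qf_size p" for i
  proof (cases "i < N")
    case True
    then have "i div p < qf_rows p" "qf_rows p < p"
      using qf_row_lt[of p i] p by (simp_all add: N_def)
    then have "\<not> int p dvd int (i div p) + 1"
      using zdvd_imp_le[of "int p" "int (i div p) + 1"] by linarith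
    moreover have "prime (int p)" "int p > 2" using p by simp_all
    ultimately have "\<not> int p dvd 2 * (int (i div p) + 1)"
      by (blast dest: odd_prime_dvd_double)
    moreover have "qf_form p i i = 2 * (int (i div p) + 1)"
      using qf_form_points[of i p i] True by (simp add: N_def)
    ultimately show ?thesis by simp
  next
    case False
    then have "\<bar>qf_form p i i\<bar> = 2"
      using qf_form_extra_vertices[of p i i] i by (simp add: N_def)
    moreover have "\<not> int p dvd 2" using p zdvd_imp_le[of "int p" 2] by auto
    ultimately show ?thesis using dvd_abs_iff by metis
  qed
  have "int p dvd qf_form p i j" if "\<not> qf_graph p j i" "i < qf_size p" "j < qf_size p" "i \<noteq> j" for i j
    using that qf_form_commute[of p i j] by (simp add: qf_graph_def)
  with diag have "fits_mod p (qf_size p) (qf_graph p) (qf_form p)"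
    by (simp add: fits_mod_def)
  from beta_le_of_fits_mod[OF p(1) this] have "beta (qf_size p) (qf_graph p) \<le> 3"
    by simp
  moreover have "real (card {N, N + 1, N + 2}) \<le> beta (qf_size p) (qf_graph p)"
  proof (rule beta_ge_independent)
    show "{N, N + 1, N + 2} \<subseteq> {0..<qf_size p}" by (auto simp: N_def qf_size_def)
    show "\<forall>u\<in>{N, N + 1, N + 2}. \<forall>v\<in>{N, N + 1, N + 2}. \<not> qf_graph p u v"
      using qf_form_extra_vertices[of p] by (auto simp: qf_graph_def N_def qf_size_def)
  qed
  ultimately show ?thesis by simp
qed

lemma diff_sq_le_of_div_eq:
  fixes a a' M :: nat
  assumes "M \<ge> 1" "a div M = a' div M"
  shows "(int a - int a')\<^sup>2 \<le> (int M - 1)\<^sup>2"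
proof -
  have "int a = int M * int (a div M) + int (a mod M)" "int a' = int M * int (a div M) + int (a' mod M)"
    using assms(2) by (metis div_mult_mod_eq mult.commute of_nat_add of_nat_mult)+
  moreover have "a mod M < M" "a' mod M < M" using assms(1) by simp_all
  ultimately have "\<bar>int a - int a'\<bar> \<le> \<bar>int M - 1\<bar>" by linarith
  then show ?thesis by (simp only: abs_le_square_iff)
qed

text \<open>Two points whose first coordinates differ by less than \<open>M\<close> pair to less than \<open>p\<close>.\<close>
lemma qf_block_in_cliques:
  assumes p: "p > 0" and M: "M \<ge> 1" "(M - 1)\<^sup>2 + 2 * qf_rows p < p"
  shows "{i. i < p * qf_rows p \<and> (i mod p) div M = j} \<in> cliques (qf_size p) (qf_graph p)"
  unfolding cliques_def
proof (intro CollectI conjI ballI impI)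
  show "{i. i < p * qf_rows p \<and> (i mod p) div M = j} \<subseteq> {0..<qf_size p}"
    by (auto simp: qf_size_def)
  fix u v assume "u \<in> {i. i < p * qf_rows p \<and> (i mod p) div M = j}"
    and "v \<in> {i. i < p * qf_rows p \<and> (i mod p) div M = j}" and "u \<noteq> v"
  then have uv: "u < p * qf_rows p" "v < p * qf_rows p" "(u mod p) div M = (v mod p) div M"
    by auto
  have "(int (u mod p) - int (v mod p))\<^sup>2 \<le> (int M - 1)\<^sup>2"
    by (rule diff_sq_le_of_div_eq[OF M(1) uv(3)])
  moreover have "(int M - 1)\<^sup>2 = int ((M - 1)\<^sup>2)" using M(1) by (simp add: of_nat_diff)
  then have "(int M - 1)\<^sup>2 + 2 * int (qf_rows p) < int p" using M(2) by linarith
  moreover have "u div p < qf_rows p" "v div p < qf_rows p" using qf_row_lt[OF p] uv by simp_all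
  moreover have "0 \<le> (int (u mod p) - int (v mod p))\<^sup>2" by simp
  ultimately have "0 < qf_form p u v" "qf_form p u v < int p"
    using qf_form_points[OF uv(1,2)] by linarith+
  then have "\<not> int p dvd qf_form p u v" using zdvd_imp_le by fastforce
  then show "qf_graph p u v" using uv \<open>u \<noteq> v\<close> by (simp add: qf_graph_def qf_size_def)
qed

lemma frac_clique_cover_qf_le_blocks:
  assumes p: "p > 0" and M: "M \<ge> 1" "(M - 1)\<^sup>2 + 2 * qf_rows p < p"
  shows "frac_clique_cover (qf_size p) (qf_graph p) \<le> (p - 1) div M + 4"
proof -
  define N where "N = p * qf_rows p"
  define block where "block j = {i. i < N \<and> (i mod p) div M = j}" for j
  define F where "F = block ` {..(p - 1) div M} \<union> {{N}, {N + 1}, {N + 2}}"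
  have "F \<subseteq> cliques (qf_size p) (qf_graph p)"
    using qf_block_in_cliques[OF p M] by (auto simp: F_def block_def N_def cliques_def qf_size_def)
  moreover have "\<exists>C\<in>F. v \<in> C" if "v < qf_size p" for v
  proof (cases "v < N")
    case True
    have "v mod p < p" using p by simp
    then have "(v mod p) div M \<le> (p - 1) div M" by (intro div_le_mono) linarith
    moreover have "v \<in> block ((v mod p) div M)" using True by (simp add: block_def)
    ultimately show ?thesis unfolding F_def by blast
  next
    case False
    then show ?thesis using that by (auto simp: F_def qf_size_def N_def)
  qed
  ultimately have "frac_clique_cover (qf_size p) (qf_graph p) \<le> card F"
    by (intro frac_clique_cover_le_card) auto
  also have "card F \<le> card (block ` {..(p - 1) div M}) + card {{N}, {N + 1}, {N + 2}}"
    unfolding F_def by (rule card_Un_le)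
  also have "\<dots> \<le> ((p - 1) div M + 1) + 3"
    using card_image_le[of "{..(p - 1) div M}" block] by (intro add_mono) (auto simp: card_insert_le_m1)
  finally show ?thesis by simp
qed

lemma frac_clique_cover_qf_ge_ratio:
  assumes p: "prime p" "p > 2"
  shows "real (p * qf_rows p) / sqrt ((real p)\<^sup>2 * (real p + 1)) \<le> frac_clique_cover (qf_size p) (qf_graph p)"
proof -
  define V where "V = {0..<p * qf_rows p}"
  define point where "point i = (int (i mod p), int (i div p) + 1)" for i
  have inj: "inj_on point V"
    by (rule inj_onI) (metis div_mult_mod_eq point_def of_nat_eq_iff prod.inject add_right_cancel)
  have "real (card (C \<inter> V)) \<le> sqrt ((real p)\<^sup>2 * (real p + 1))" if C: "C \<in> cliques (qf_size p) (qf_graph p)" for C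
  proof -
    have "point i \<in> {0..<int p} \<times> {1..<int p}" if "i \<in> V" for i
      using qf_row_lt[of p i] p that by (auto simp: point_def V_def)
    then have "point ` (C \<inter> V) \<subseteq> {0..<int p} \<times> {1..<int p}" by blast
    moreover have "\<not> int p dvd (fst x - fst y)\<^sup>2 + snd x + snd y"
      if x: "x \<in> point ` (C \<inter> V)" and y: "y \<in> point ` (C \<inter> V)" and "x \<noteq> y" for x y
    proof -
      obtain i j where ij: "i \<in> C \<inter> V" "j \<in> C \<inter> V" "x = point i" "y = point j"
        using x y by blast
      then have "qf_graph p i j" using C \<open>x \<noteq> y\<close> by (auto simp: cliques_def)
      then show ?thesis using ij qf_form_points[of i p j] by (simp add: qf_graph_def point_def V_def)
    qed
    ultimately have "(real (card (point ` (C \<inter> V))))\<^sup>2 \<le> (real p)\<^sup>2 * (real p + 1)"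
      using card_sq_le_if_pairs_nonzero[of "int p"] p by simp
    moreover have "card (point ` (C \<inter> V)) = card (C \<inter> V)"
      by (rule card_image) (rule inj_on_subset[OF inj], blast)
    ultimately show ?thesis by (simp add: real_le_rsqrt)
  qed
  then have "real (card V) / sqrt ((real p)\<^sup>2 * (real p + 1)) \<le> frac_clique_cover (qf_size p) (qf_graph p)"
    using p by (intro frac_clique_cover_ge) (auto simp: V_def qf_size_def)
  then show ?thesis by (simp add: V_def)
qed

section \<open>Asymptotics\<close>

lemma powr_quarter_power4:
  fixes a :: real
  assumes "0 \<le> a"
  shows "(a ^ 4) powr (1/4) = a"
proof (cases "a = 0")
  case False
  with assms have "a > 0" by simp
  then have "a ^ 4 = a powr 4" by simp
  then have "(a ^ 4) powr (1/4) = (a powr 4) powr (1/4)" by (simp only:)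
  also have "\<dots> = a powr (4 * (1/4))" by (rule powr_powr)
  also have "\<dots> = a" using \<open>a > 0\<close> by simp
  finally show ?thesis .
qed simp

lemma qf_size_quarter_bounds:
  assumes "p \<ge> 64"
  shows "sqrt p / 2 \<le> real (qf_size p) powr (1/4)" "real (qf_size p) powr (1/4) \<le> sqrt p"
proof -
  have rows: "real p / 4 - 1 \<le> real (qf_rows p)" "real (qf_rows p) \<le> real p / 4"
    unfolding qf_rows_def by linarith+
  have size: "real (qf_size p) = real p * real (qf_rows p) + 3" by (simp add: qf_size_def)
  have p4: "(sqrt p) ^ 4 = real p * real p" by (simp add: power4_eq_xxxx)
  have "(sqrt p / 2) ^ 4 \<le> real (qf_size p)"
  proof -
    have "real p * (real p / 8) \<le> real p * real (qf_rows p)"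
      using rows assms by (intro mult_left_mono) auto
    then show ?thesis using size p4 by (simp add: power_divide)
  qed
  then show "sqrt p / 2 \<le> real (qf_size p) powr (1/4)"
    using powr_mono2[of "1/4" "(sqrt p / 2) ^ 4"] powr_quarter_power4[of "sqrt p / 2"] by simp
  have "real (qf_size p) \<le> (sqrt p) ^ 4"
  proof -
    have "real p * real (qf_rows p) \<le> real p * (real p / 4)"
      using rows by (intro mult_left_mono) auto
    moreover have "64 * 64 \<le> real p * real p" using assms by (intro mult_mono) auto
    ultimately show ?thesis using size p4 by linarith
  qed
  then show "real (qf_size p) powr (1/4) \<le> sqrt p"
    using powr_mono2[of "1/4" _ "(sqrt p) ^ 4"] powr_quarter_power4[of "sqrt p"] by simp
qed

lemma frac_clique_cover_qf_le_sqrt: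
  assumes "p \<ge> 64"
  shows "frac_clique_cover (qf_size p) (qf_graph p) \<le> 5 * sqrt p"
proof -
  define s where "s = sqrt p"
  have s: "s \<ge> 8" "s * s = real p"
    unfolding s_def using assms real_le_rsqrt[of 8 p] by auto
  text \<open>Blocks of width \<open>M \<approx> \<surd>p / 2\<close> keep the pairing of two points below \<open>p / 4 + p / 2\<close>.\<close>
  define M where "M = nat \<lfloor>s / 2\<rfloor>"
  have M: "real M \<le> s / 2" "s / 2 - 1 < real M" "M \<ge> 1" unfolding M_def using s by linarith+
  have "real ((M - 1)\<^sup>2) \<le> (s / 2)\<^sup>2"
    using M by (simp add: of_nat_diff power_mono)
  moreover have "real (qf_rows p) \<le> real p / 4"
    unfolding qf_rows_def by linarith
  ultimately have "real ((M - 1)\<^sup>2 + 2 * qf_rows p) \<le> (s / 2)\<^sup>2 + 2 * (real p / 4)"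
    by simp
  also have "\<dots> < real p" using s assms by (simp add: power2_eq_square field_simps)
  finally have "(M - 1)\<^sup>2 + 2 * qf_rows p < p" by linarith
  then have "frac_clique_cover (qf_size p) (qf_graph p) \<le> (p - 1) div M + 4"
    using assms M(3) by (intro frac_clique_cover_qf_le_blocks) auto
  also have "real ((p - 1) div M + 4) \<le> real p / real M + 4"
  proof -
    have "(p - 1) div M * M \<le> p" using div_times_less_eq_dividend[of "p - 1" M] by linarith
    then have "real ((p - 1) div M) * real M \<le> real p" by (metis of_nat_le_iff of_nat_mult)
    then show ?thesis using M(3) by (simp add: le_divide_eq)
  qed
  also have "real p / real M \<le> real p / (s / 4)"
    using M s by (intro divide_left_mono) auto
  also have "real p / (s / 4) = 4 * s" using s by (simp add: field_simps)
  finally show ?thesis using s by (simp add: s_def)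
qed

lemma frac_clique_cover_qf_ge_sqrt:
  assumes "prime p" "p \<ge> 64"
  shows "sqrt p / 16 \<le> frac_clique_cover (qf_size p) (qf_graph p)"
proof -
  have "sqrt (real p + 1) \<le> sqrt (4 * real p)" using assms by simp
  then have root: "sqrt (real p + 1) \<le> 2 * sqrt p" by (simp add: real_sqrt_mult)
  have rows: "real p / 8 \<le> real (qf_rows p)" using assms unfolding qf_rows_def by linarith
  have "sqrt p / 16 = (real p / 8) / (2 * sqrt p)"
    using assms by (simp add: field_simps flip: real_sqrt_mult)
  also have "\<dots> \<le> real (qf_rows p) / sqrt (real p + 1)"
    using root rows assms by (intro frac_le) auto
  also have "\<dots> = real (p * qf_rows p) / sqrt ((real p)\<^sup>2 * (real p + 1))"
    using assms by (simp add: real_sqrt_mult)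
  also have "\<dots> \<le> frac_clique_cover (qf_size p) (qf_graph p)"
    using assms by (intro frac_clique_cover_qf_ge_ratio) auto
  finally show ?thesis .
qed

lemma frac_clique_cover_qf_theta_bounds:
  assumes "prime p" "p \<ge> 64"
  shows "1/16 * norm (real (qf_size p) powr (1/4)) \<le> norm (frac_clique_cover (qf_size p) (qf_graph p)) \<and>
    norm (frac_clique_cover (qf_size p) (qf_graph p)) \<le> 10 * norm (real (qf_size p) powr (1/4))"
proof -
  have "0 \<le> sqrt p" by simp
  then show ?thesis
    using qf_size_quarter_bounds[OF assms(2)] frac_clique_cover_qf_le_sqrt[OF assms(2)]
      frac_clique_cover_qf_ge_sqrt[OF assms] by simp
qed

lemma le_qf_size:
  assumes "p \<ge> 4"
  shows "p \<le> qf_size p"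
proof -
  have "1 \<le> qf_rows p" using assms by (simp add: qf_rows_def)
  then have "p \<le> p * qf_rows p" by simp
  then show ?thesis unfolding qf_size_def by linarith
qed

theorem theorem3:
  shows "\<exists>(N :: nat \<Rightarrow> nat) (G :: nat \<Rightarrow> nat \<Rightarrow> nat \<Rightarrow> bool).
     filterlim N at_top sequentially \<and>
     (\<forall>k. simple_graph (N k) (G k) \<and> beta (N k) (G k) = 3) \<and>
     (\<lambda>k. frac_clique_cover (N k) (G k)) \<in> \<Theta>(\<lambda>k. real (N k) powr (1/4))"
proof -
  have "\<forall>k. \<exists>p. prime p \<and> k + 64 < (p :: nat)" using bigger_prime by blast
  then obtain q :: "nat \<Rightarrow> nat" where q: "\<And>k. prime (q k)" "\<And>k. k + 64 < q k"
    by metis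
  have q64: "q k \<ge> 64" for k using q(2)[of k] by simp
  have "k \<le> qf_size (q k)" for k
    using le_qf_size[of "q k"] q(2)[of k] by linarith
  then have "filterlim (\<lambda>k. qf_size (q k)) at_top sequentially"
    by (intro filterlim_at_top_mono[OF filterlim_ident]) auto
  moreover have "simple_graph (qf_size (q k)) (qf_graph (q k)) \<and> beta (qf_size (q k)) (qf_graph (q k)) = 3" for k
    using q[of k] simple_graph_qf_graph beta_qf_graph by auto
  moreover have "(\<lambda>k. frac_clique_cover (qf_size (q k)) (qf_graph (q k)))
      \<in> \<Theta>(\<lambda>k. real (qf_size (q k)) powr (1/4))"
    using frac_clique_cover_qf_theta_bounds[OF q(1) q64]
    by (intro bigthetaI'[of "1/16" 10] always_eventually allI) simp_all
  ultimately show ?thesis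
    by (intro exI[where x = "\<lambda>k. qf_size (q k)"] exI[where x = "\<lambda>k. qf_graph (q k)"]) blast
qed

end
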